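(* For $k\ge 3$ let $N_k(t)=\mathbb{E}[Z_k(t)]$ be the expected number of vertices of degree $k$ in a Random Apollonian Network after $t$ steps. For every $k \geq 3$ the limit $\lim_{t \to +\infty} \frac{N_k(t)}{t}$ exists. Writing $b_k=\lim_{t \to +\infty} \frac{N_k(t)}{t}$, we have $b_3=\frac{2}{5}$, $b_4=\frac{1}{5}$, $b_5=\frac{4}{35}$, and $b_k = \frac{24}{k(k+1)(k+2)}$ for $k\geq 6$. Furthermore, for all $k \geq 3$ (and all $t\ge 1$), $$ |N_k(t) - b_k t| \leq K, \quad\text{where } K=3.6.$$
   Context: A Random Apollonian Network (RAN) is generated as follows: start (at time $t=0$) with a single triangular face. At each step $t=1,2,\dots$, pick one of the current (bounded) triangular faces uniformly at random, insert a new vertex inside it, and connect it to the three vertices on the boundary of that face, subdividing the face into three new triangular faces. After $t$ steps there are $2t+1$ triangular faces. $Z_k(t)$ denotes the number of vertices of degree exactly $k$ after $t$ steps. *)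

theory Defs
  imports "HOL-Probability.Probability"
begin

text \<open>A state of the Random Apollonian Network: vertices are 0,...,nv-1;
  edges are 2-element vertex sets; faces are the current bounded triangular
  faces, each given as a 3-element vertex set.\<close>

record ran_state =
  nv :: nat
  edges :: "nat set set"
  faces :: "nat set set"

definition ran_init :: ran_state where
  "ran_init = \<lparr> nv = 3, edges = {{0,1},{0,2},{1,2}}, faces = {{0,1,2}} \<rparr>"

definition insert_in_face :: "ran_state \<Rightarrow> nat set \<Rightarrow> ran_state" where
  "insert_in_face s F =
     \<lparr> nv = Suc (nv s),
       edges = edges s \<union> (\<lambda>u. {nv s, u}) ` F,
       faces = (faces s - {F}) \<union> (\<lambda>u. insert (nv s) (F - {u})) ` F \<rparr>"

definition ran_step :: "ran_state \<Rightarrow> ran_state pmf" where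
  "ran_step s = map_pmf (insert_in_face s) (pmf_of_set (faces s))"

primrec ran :: "nat \<Rightarrow> ran_state pmf" where
  "ran 0 = return_pmf ran_init"
| "ran (Suc t) = bind_pmf (ran t) ran_step"

definition degree :: "ran_state \<Rightarrow> nat \<Rightarrow> nat" where
  "degree s x = card {e \<in> edges s. x \<in> e}"

definition Z :: "nat \<Rightarrow> ran_state \<Rightarrow> nat" where
  "Z k s = card {x \<in> {..<nv s}. degree s x = k}"

definition N :: "nat \<Rightarrow> nat \<Rightarrow> real" where
  "N k t = measure_pmf.expectation (ran t) (\<lambda>s. real (Z k s))"

end

theory Submission
  imports Defs
begin

(* Inserting a vertex into the uniformly chosen face F raises the degree of the three corners
   of F by one, and a vertex x lies in deg x - [x is an initial corner] bounded faces.  Averaging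
   over the 2t+1 faces gives the exact recurrence

     N_k(t+1) = N_k(t) + [k = 3] + ((k-1) N_{k-1}(t) - k N_k(t) - C_{k-1}(t) + C_k(t)) / (2t+1),

   where C_k(t) \<in> [0,3] is the expected number of initial corners of degree k.  The numbers
   b_k = 24/(k(k+1)(k+2)), extended by b_2 = 0, satisfy (k-1) b_{k-1} = (k+2) b_k - 2 [k = 3],
   so the error e_k(t) = N_k(t) - b_k t obeys

     e_k(t+1) = (1 - k/(2t+1)) e_k(t) + ((k-1)/(2t+1)) e_{k-1}(t) + s_k(t)/(2t+1)

   with |s_k(t)| \<le> 18/5.  For k \<le> 2t+1 this is a convex combination, so the bound |e_k(t)| \<le> 18/5,
   attained at t = 1, k = 3, propagates by induction on t; for larger k, N_k(t+1) vanishes apart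
   from N_4(2), which is computed directly.  Dividing by t gives the limits. *)

definition face_count :: "ran_state \<Rightarrow> nat \<Rightarrow> nat" where
  "face_count s x = card {F \<in> faces s. x \<in> F}"

(* The corners 0, 1, 2 of the initial triangle also lie on the unbounded face, which is not
   recorded among the faces; hence the correction term in the degree. *)
definition ran_invariant :: "nat \<Rightarrow> ran_state \<Rightarrow> bool" where
  "ran_invariant t s \<longleftrightarrow>
     nv s = t + 3 \<and> finite (faces s) \<and> card (faces s) = 2 * t + 1
   \<and> (\<forall>F\<in>faces s. F \<subseteq> {..<nv s} \<and> card F = 3)
   \<and> finite (edges s) \<and> (\<forall>e\<in>edges s. e \<subseteq> {..<nv s})
   \<and> (\<forall>x<nv s. degree s x = face_count s x + (if x < 3 then 1 else 0)
        \<and> degree s x \<le> t + 2 \<and> (1 \<le> t \<longrightarrow> 3 \<le> degree s x))"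

lemma ran_invariant_init: "ran_invariant 0 ran_init"
proof -
  have "{e \<in> edges ran_init. 0 \<in> e} = {{0, 1}, {0, 2}}"
    and "{e \<in> edges ran_init. 1 \<in> e} = {{0, 1}, {1, 2}}"
    and "{e \<in> edges ran_init. 2 \<in> e} = {{0, 2}, {1, 2}}"
    by (auto simp: ran_init_def)
  then have "degree ran_init x = 2" if "x < 3" for x
  proof -
    from that consider "x = 0" | "x = 1" | "x = 2" by linarith
    then show ?thesis unfolding degree_def
      using \<open>{e \<in> edges ran_init. 0 \<in> e} = _\<close> \<open>{e \<in> edges ran_init. 1 \<in> e} = _\<close>
        \<open>{e \<in> edges ran_init. 2 \<in> e} = _\<close>
      by cases (simp_all add: doubleton_eq_iff)
  qed
  moreover have "face_count ran_init x = 1" if "x < 3" for x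
  proof -
    have "{F \<in> faces ran_init. x \<in> F} = {{0, 1, 2}}" using that by (auto simp: ran_init_def)
    then show ?thesis by (simp add: face_count_def)
  qed
  ultimately show ?thesis by (auto simp: ran_invariant_def ran_init_def)
qed

lemma ran_invariantD:
  assumes "ran_invariant t s"
  shows "nv s = t + 3" and "finite (faces s)" and "card (faces s) = 2 * t + 1"
    and "F \<in> faces s \<Longrightarrow> F \<subseteq> {..<nv s}" and "F \<in> faces s \<Longrightarrow> card F = 3"
    and "finite (edges s)" and "e \<in> edges s \<Longrightarrow> e \<subseteq> {..<nv s}"
  using assms unfolding ran_invariant_def by (auto simp: subset_iff)

lemma ran_invariant_degree:
  assumes "ran_invariant t s" and "x < nv s"
  shows "degree s x = face_count s x + (if x < 3 then 1 else 0)"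
    and "degree s x \<le> t + 2" and "1 \<le> t \<Longrightarrow> 3 \<le> degree s x"
  using assms unfolding ran_invariant_def by blast+

context
  fixes t s F
  assumes inv: "ran_invariant t s" and face: "F \<in> faces s"
begin

private abbreviation "s' \<equiv> insert_in_face s F"
private abbreviation "v \<equiv> nv s"
private abbreviation "subface \<equiv> \<lambda>u. insert v (F - {u})"

private lemma face_props: "F \<subseteq> {..<v}" "card F = 3" "finite F"
  using ran_invariantD(4,5)[OF inv face] by (auto intro: card_ge_0_finite)

private lemma new_vertex_fresh: "v \<notin> F" "e \<in> edges s \<Longrightarrow> v \<notin> e" "H \<in> faces s \<Longrightarrow> v \<notin> H"
  using face_props(1) ran_invariantD(7,4)[OF inv] by auto

private lemma inj_subface: "inj_on subface F"
proof (rule inj_onI)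
  fix u w assume "u \<in> F" "w \<in> F" "subface u = subface w"
  moreover have "subface x - {v} = F - {x}" for x using new_vertex_fresh(1) by auto
  ultimately have "F - {u} = F - {w}" by metis
  then show "u = w" using \<open>u \<in> F\<close> by blast
qed

private lemma inj_new_edge: "inj_on (\<lambda>u. {v, u}) F"
  using new_vertex_fresh(1) by (auto intro!: inj_onI simp: doubleton_eq_iff)

lemma nv_insert_in_face: "nv s' = Suc v"
  by (simp add: insert_in_face_def)

lemma degree_insert_in_face_old:
  assumes "x < v"
  shows "degree s' x = degree s x + (if x \<in> F then 1 else 0)"
proof -
  have "{e \<in> edges s'. x \<in> e} = {e \<in> edges s. x \<in> e} \<union> (if x \<in> F then {{v, x}} else {})"
    using assms by (auto simp: insert_in_face_def)
  moreover have "{v, x} \<notin> edges s" using new_vertex_fresh(2) by auto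
  ultimately show ?thesis using ran_invariantD(6)[OF inv] unfolding degree_def by auto
qed

lemma degree_insert_in_face_new: "degree s' v = 3"
proof -
  have "{e \<in> edges s'. v \<in> e} = (\<lambda>u. {v, u}) ` F"
    using new_vertex_fresh(2) by (auto simp: insert_in_face_def)
  then show ?thesis unfolding degree_def using card_image[OF inj_new_edge] face_props by simp
qed

lemma face_count_insert_in_face_old:
  assumes "x < v"
  shows "face_count s' x = face_count s x + (if x \<in> F then 1 else 0)"
proof (cases "x \<in> F")
  case True
  note fin = ran_invariantD(2)[OF inv]
  have "{H \<in> faces s'. x \<in> H} = ({H \<in> faces s. x \<in> H} - {F}) \<union> subface ` (F - {x})"
    using assms True by (auto simp: insert_in_face_def)
  moreover have "({H \<in> faces s. x \<in> H} - {F}) \<inter> subface ` (F - {x}) = {}"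
    using new_vertex_fresh(3) by auto
  ultimately have "face_count s' x = card ({H \<in> faces s. x \<in> H} - {F}) + card (subface ` (F - {x}))"
    unfolding face_count_def using fin face_props(3) by (simp add: card_Un_disjoint)
  moreover have "card (subface ` (F - {x})) = 2"
    using card_image[OF inj_on_subset[OF inj_subface]] face_props True by auto
  moreover have "card ({H \<in> faces s. x \<in> H} - {F}) + 1 = face_count s x"
    unfolding face_count_def using True face fin card_Suc_Diff1[of "{H \<in> faces s. x \<in> H}" F] by simp
  ultimately show ?thesis using True by simp
next
  case False
  then have "{H \<in> faces s'. x \<in> H} = {H \<in> faces s. x \<in> H}"
    using assms by (auto simp: insert_in_face_def)
  then show ?thesis using False by (simp add: face_count_def)
qed

lemma face_count_insert_in_face_new: "face_count s' v = 3"
proof -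
  have "{H \<in> faces s'. v \<in> H} = subface ` F"
    using new_vertex_fresh(3) by (auto simp: insert_in_face_def)
  then show ?thesis unfolding face_count_def using card_image[OF inj_subface] face_props by simp
qed

lemma card_faces_insert_in_face: "card (faces s') = 2 * t + 3"
proof -
  note fin = ran_invariantD(2)[OF inv]
  have "card (faces s - {F}) = 2 * t" using ran_invariantD(3)[OF inv] fin face by simp
  moreover have "(faces s - {F}) \<inter> subface ` F = {}" using new_vertex_fresh(3) by blast
  moreover have "card (subface ` F) = 3" using card_image[OF inj_subface] face_props by simp
  ultimately show ?thesis unfolding insert_in_face_def using fin face_props(3)
    by (simp add: card_Un_disjoint)
qed

lemma degree_insert_in_face_ge_3:
  assumes "x < nv s'"
  shows "3 \<le> degree s' x"
proof (cases "x = v")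
  case False
  then have x: "x < v" using assms nv_insert_in_face by simp
  show ?thesis
  proof (cases t)
    case 0
    have "F \<subseteq> {..<3}" using face_props(1) ran_invariantD(1)[OF inv] 0 by simp
    then have "F = {..<3}" using face_props(2) by (intro card_subset_eq) auto
    then have "x \<in> F" "x < 3" using x ran_invariantD(1)[OF inv] 0 by auto
    moreover have "face_count s x \<noteq> 0"
      using \<open>x \<in> F\<close> face ran_invariantD(2)[OF inv] by (auto simp: face_count_def)
    ultimately show ?thesis
      using degree_insert_in_face_old[OF x] ran_invariant_degree(1)[OF inv x] by simp
  next
    case (Suc n)
    then show ?thesis using degree_insert_in_face_old[OF x] ran_invariant_degree(3)[OF inv x] by simp
  qed
qed (simp add: degree_insert_in_face_new)

lemma ran_invariant_insert_in_face: "ran_invariant (Suc t) s'"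
proof -
  have "H \<subseteq> {..<nv s'} \<and> card H = 3" if H: "H \<in> faces s'" for H
  proof (cases "H \<in> faces s")
    case True
    then show ?thesis using ran_invariantD(4,5)[OF inv] nv_insert_in_face by fastforce
  next
    case False
    then obtain u where "u \<in> F" "H = subface u" using H by (auto simp: insert_in_face_def)
    moreover have "card (F - {u}) = 2" using \<open>u \<in> F\<close> face_props by simp
    ultimately show ?thesis
      using face_props new_vertex_fresh(1) nv_insert_in_face by (auto simp: card_insert_if)
  qed
  moreover have "e \<subseteq> {..<nv s'}" if "e \<in> edges s'" for e
    using that ran_invariantD(7)[OF inv] face_props(1) nv_insert_in_face
    by (fastforce simp: insert_in_face_def)
  moreover have "degree s' x = face_count s' x + (if x < 3 then 1 else 0) \<and> degree s' x \<le> Suc t + 2"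
    if "x < nv s'" for x
  proof (cases "x = v")
    case True
    then show ?thesis
      using degree_insert_in_face_new face_count_insert_in_face_new ran_invariantD(1)[OF inv] by simp
  next
    case False
    then have "x < v" using that nv_insert_in_face by simp
    then show ?thesis using ran_invariant_degree(1,2)[OF inv \<open>x < v\<close>]
      by (simp add: degree_insert_in_face_old face_count_insert_in_face_old)
  qed
  moreover have "finite (faces s')" "finite (edges s')"
    using ran_invariantD(2,6)[OF inv] face_props(3) by (simp_all add: insert_in_face_def)
  moreover have "nv s' = Suc t + 3" "card (faces s') = 2 * Suc t + 1"
    using nv_insert_in_face ran_invariantD(1)[OF inv] card_faces_insert_in_face by simp_all
  ultimately show ?thesis
    unfolding ran_invariant_def using degree_insert_in_face_ge_3 by blast
qed

end

lemma set_pmf_ran_step: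
  assumes "ran_invariant t s"
  shows "set_pmf (ran_step s) = insert_in_face s ` faces s"
proof -
  have "faces s \<noteq> {}" using ran_invariantD(3)[OF assms] by auto
  then show ?thesis using ran_invariantD(2)[OF assms] by (simp add: ran_step_def)
qed

lemma finite_set_pmf_ran_step: "ran_invariant t s \<Longrightarrow> finite (set_pmf (ran_step s))"
  by (simp add: set_pmf_ran_step ran_invariantD(2))

lemma set_pmf_ran: "finite (set_pmf (ran t)) \<and> (\<forall>s\<in>set_pmf (ran t). ran_invariant t s)"
proof (induction t)
  case 0
  then show ?case using ran_invariant_init by simp
next
  case (Suc t)
  then have "set_pmf (ran (Suc t)) = (\<Union>s\<in>set_pmf (ran t). insert_in_face s ` faces s)"
    unfolding ran.simps set_bind_pmf by (intro SUP_cong refl set_pmf_ran_step) blast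
  then show ?case using Suc ran_invariantD(2) ran_invariant_insert_in_face by auto
qed

lemma finite_set_pmf_ran: "finite (set_pmf (ran t))"
  using set_pmf_ran by blast

lemma ran_invariant_set_pmf_ran: "s \<in> set_pmf (ran t) \<Longrightarrow> ran_invariant t s"
  using set_pmf_ran by blast

lemma integrable_ran:
  fixes f :: "ran_state \<Rightarrow> real"
  shows "integrable (measure_pmf (ran t)) f"
  by (rule integrable_measure_pmf_finite[OF finite_set_pmf_ran])

lemma expectation_ran_cong:
  "(\<And>s. ran_invariant t s \<Longrightarrow> f s = g s) \<Longrightarrow>
    measure_pmf.expectation (ran t) f = measure_pmf.expectation (ran t) g"
  by (intro integral_cong_AE) (auto simp: AE_measure_pmf_iff ran_invariant_set_pmf_ran)

lemma expectation_ran_mono: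
  fixes f g :: "ran_state \<Rightarrow> real"
  shows "(\<And>s. ran_invariant t s \<Longrightarrow> f s \<le> g s) \<Longrightarrow>
    measure_pmf.expectation (ran t) f \<le> measure_pmf.expectation (ran t) g"
  by (intro integral_mono_AE integrable_ran) (auto simp: AE_measure_pmf_iff ran_invariant_set_pmf_ran)

lemma expectation_ran_Suc:
  fixes f :: "ran_state \<Rightarrow> real"
  shows "measure_pmf.expectation (ran (Suc t)) f =
    measure_pmf.expectation (ran t) (\<lambda>s. measure_pmf.expectation (ran_step s) f)"
proof -
  note fin = finite_set_pmf_ran[of t]
  have "measure_pmf.expectation (ran t \<bind> ran_step) f =
      (\<Sum>s\<in>set_pmf (ran t). pmf (ran t) s *\<^sub>R measure_pmf.expectation (ran_step s) f)"
    by (intro pmf_expectation_bind[OF fin])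
      (auto intro: finite_set_pmf_ran_step ran_invariant_set_pmf_ran)
  also have "\<dots> = measure_pmf.expectation (ran t) (\<lambda>s. measure_pmf.expectation (ran_step s) f)"
    by (rule integral_measure_pmf[OF fin, symmetric]) auto
  finally show ?thesis by simp
qed

definition degree_count :: "nat \<Rightarrow> ran_state \<Rightarrow> real" where
  "degree_count k s = (\<Sum>x<nv s. of_bool (degree s x = k))"

definition corner_count :: "nat \<Rightarrow> ran_state \<Rightarrow> real" where
  "corner_count k s = (\<Sum>x<3. of_bool (degree s x = k))"

lemma real_Z_eq_degree_count: "real (Z k s) = degree_count k s"
proof -
  have "{x \<in> {..<nv s}. degree s x = k} = {..<nv s} \<inter> {x. degree s x = k}" by blast
  then show ?thesis unfolding Z_def degree_count_def by simp
qed

lemma degree_count_insert_in_face: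
  assumes "ran_invariant t s" and "F \<in> faces s"
  shows "degree_count (Suc k) (insert_in_face s F) = degree_count (Suc k) s + of_bool (k = 2)
    + (\<Sum>x\<in>F. of_bool (degree s x = k) - of_bool (degree s x = Suc k))"
proof -
  let ?s' = "insert_in_face s F"
  define h where "h x = (of_bool (degree s x = k) - of_bool (degree s x = Suc k) :: real)" for x
  have F: "{..<nv s} \<inter> F = F" using ran_invariantD(4)[OF assms] by blast
  have "(of_bool (degree ?s' x = Suc k) :: real) =
      of_bool (degree s x = Suc k) + (if x \<in> F then h x else 0)" if "x < nv s" for x
    using degree_insert_in_face_old[OF assms that] by (simp add: h_def)
  then have "(\<Sum>x<nv s. of_bool (degree ?s' x = Suc k)) =
      degree_count (Suc k) s + (\<Sum>x<nv s. if x \<in> F then h x else 0)"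
    unfolding degree_count_def by (simp add: sum.distrib)
  also have "(\<Sum>x<nv s. if x \<in> F then h x else 0) = sum h F"
    by (simp add: sum.inter_restrict[symmetric] F)
  finally show ?thesis
    unfolding degree_count_def nv_insert_in_face[OF assms] sum.lessThan_Suc h_def
    using degree_insert_in_face_new[OF assms] by simp
qed

lemma sum_sum_eq_sum_card:
  fixes h :: "'a \<Rightarrow> 'b::comm_semiring_1"
  assumes "finite A" and "finite B" and "\<And>F. F \<in> A \<Longrightarrow> F \<subseteq> B"
  shows "(\<Sum>F\<in>A. \<Sum>x\<in>F. h x) = (\<Sum>x\<in>B. of_nat (card {F \<in> A. x \<in> F}) * h x)"
proof -
  have "(\<Sum>F\<in>A. \<Sum>x\<in>F. h x) = (\<Sum>F\<in>A. \<Sum>x\<in>{x \<in> B. x \<in> F}. h x)"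
    using assms(3) by (intro sum.cong refl arg_cong2[where f = sum]) auto
  also have "\<dots> = (\<Sum>x\<in>B. \<Sum>F\<in>{F \<in> A. x \<in> F}. h x)"
    by (rule sum.swap_restrict[OF assms(1,2)])
  finally show ?thesis by simp
qed

lemma sum_face_count_degree_indicator:
  assumes "ran_invariant t s"
  shows "(\<Sum>x<nv s. real (face_count s x) * (of_bool (degree s x = k) - of_bool (degree s x = Suc k)))
    = real k * degree_count k s - real (Suc k) * degree_count (Suc k) s
      - corner_count k s + corner_count (Suc k) s"
proof -
  define h where "h x = (of_bool (degree s x = k) - of_bool (degree s x = Suc k) :: real)" for x
  have "real (face_count s x) * h x = real (degree s x) * h x - (if x < 3 then h x else 0)"
    if "x < nv s" for x
    using ran_invariant_degree(1)[OF assms that] by (simp add: algebra_simps)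
  moreover have "real (degree s x) * h x =
      real k * of_bool (degree s x = k) - real (Suc k) * of_bool (degree s x = Suc k)" for x
    by (simp add: h_def algebra_simps)
  moreover have "(\<Sum>x<nv s. if x < 3 then h x else 0) = (\<Sum>x<3. h x)"
  proof -
    have "(\<Sum>x<nv s. if x < 3 then h x else 0) = sum h ({..<nv s} \<inter> {..<3})"
      by (simp add: sum.inter_restrict)
    also have "{..<nv s} \<inter> {..<3} = {..<3}" using ran_invariantD(1)[OF assms] by auto
    finally show ?thesis .
  qed
  ultimately show ?thesis
    unfolding degree_count_def corner_count_def
    by (simp add: sum_subtractf sum_distrib_left h_def)
qed

lemma expectation_ran_step_degree_count:
  assumes "ran_invariant t s"
  shows "measure_pmf.expectation (ran_step s) (degree_count (Suc k)) =
    degree_count (Suc k) s + of_bool (k = 2)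
    + (real k * degree_count k s - real (Suc k) * degree_count (Suc k) s
       - corner_count k s + corner_count (Suc k) s) / (2 * real t + 1)"
proof -
  note fin = ran_invariantD(2)[OF assms]
  have ne: "faces s \<noteq> {}" using ran_invariantD(3)[OF assms] by auto
  have "(\<Sum>F\<in>faces s. \<Sum>x\<in>F. of_bool (degree s x = k) - of_bool (degree s x = Suc k)) =
      (\<Sum>x<nv s. real (face_count s x) * (of_bool (degree s x = k) - of_bool (degree s x = Suc k)))"
    unfolding face_count_def using fin ran_invariantD(4)[OF assms] by (intro sum_sum_eq_sum_card) auto
  then have "(\<Sum>F\<in>faces s. degree_count (Suc k) (insert_in_face s F)) =
      real (card (faces s)) * (degree_count (Suc k) s + of_bool (k = 2))
      + (real k * degree_count k s - real (Suc k) * degree_count (Suc k) s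
         - corner_count k s + corner_count (Suc k) s)"
    using degree_count_insert_in_face[OF assms] sum_face_count_degree_indicator[OF assms]
    by (simp add: sum.distrib)
  then show ?thesis
    using fin ne ran_invariantD(3)[OF assms]
    by (simp add: ran_step_def integral_pmf_of_set field_simps)
qed

definition N_corner :: "nat \<Rightarrow> nat \<Rightarrow> real" where
  "N_corner k t = measure_pmf.expectation (ran t) (corner_count k)"

lemma N_eq_expectation_degree_count: "N k t = measure_pmf.expectation (ran t) (degree_count k)"
  unfolding N_def real_Z_eq_degree_count ..

lemma N_Suc:
  "N (Suc k) (Suc t) = N (Suc k) t + of_bool (k = 2)
    + (real k * N k t - real (Suc k) * N (Suc k) t - N_corner k t + N_corner (Suc k) t) / (2 * real t + 1)"
proof -
  have "N (Suc k) (Suc t) = measure_pmf.expectation (ran t) (\<lambda>s. degree_count (Suc k) s + of_bool (k = 2)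
    + (real k * degree_count k s - real (Suc k) * degree_count (Suc k) s
       - corner_count k s + corner_count (Suc k) s) / (2 * real t + 1))"
    unfolding N_eq_expectation_degree_count expectation_ran_Suc
    by (intro expectation_ran_cong expectation_ran_step_degree_count)
  then show ?thesis
    unfolding N_eq_expectation_degree_count N_corner_def by (simp add: integrable_ran)
qed

lemma corner_count_bounds: "0 \<le> corner_count k s" "corner_count k s \<le> 3"
  unfolding corner_count_def using sum_mono[of "{..<3::nat}" "\<lambda>x. of_bool (degree s x = k) :: real" "\<lambda>_. 1"]
  by (auto intro: sum_nonneg)

lemma corner_count_le_degree_count: "ran_invariant t s \<Longrightarrow> corner_count k s \<le> degree_count k s"
  unfolding corner_count_def degree_count_def
  by (intro sum_mono2) (auto simp: ran_invariantD(1))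

lemma N_corner_bounds: "0 \<le> N_corner k t" "N_corner k t \<le> 3"
  using expectation_ran_mono[of t "\<lambda>_. 0" "corner_count k"] expectation_ran_mono[of t "corner_count k" "\<lambda>_. 3"]
  unfolding N_corner_def by (simp_all add: corner_count_bounds)

lemma N_corner_le_N: "N_corner k t \<le> N k t"
  unfolding N_corner_def N_eq_expectation_degree_count
  by (intro expectation_ran_mono corner_count_le_degree_count)

lemma N_eq_0_if_vertex_degrees_avoid:
  assumes "\<And>s x. ran_invariant t s \<Longrightarrow> x < nv s \<Longrightarrow> degree s x \<noteq> k"
  shows "N k t = 0"
proof -
  have "N k t = measure_pmf.expectation (ran t) (\<lambda>_. 0)"
    unfolding N_eq_expectation_degree_count degree_count_def
    using assms by (intro expectation_ran_cong) simp
  then show ?thesis by simp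
qed

lemma N_eq_0_if_gt: "t + 2 < k \<Longrightarrow> N k t = 0"
  by (intro N_eq_0_if_vertex_degrees_avoid) (metis ran_invariant_degree(2) not_less)

lemma N_eq_0_if_lt_3: "1 \<le> t \<Longrightarrow> k < 3 \<Longrightarrow> N k t = 0"
  by (intro N_eq_0_if_vertex_degrees_avoid) (metis ran_invariant_degree(3) not_less)

lemma N_3_1: "N 3 1 = 4"
proof -
  have "degree_count 3 s = 4" if "ran_invariant 1 s" for s
  proof -
    have "degree s x = 3" if "x < nv s" for x
      using ran_invariant_degree(2,3)[OF \<open>ran_invariant 1 s\<close> that] by simp
    then show ?thesis unfolding degree_count_def using ran_invariantD(1)[OF that] by simp
  qed
  then show ?thesis unfolding N_eq_expectation_degree_count
    using expectation_ran_cong[of 1 "degree_count 3" "\<lambda>_. 4"] by simp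
qed

(* Extended by 0 below degree 3, where N k t vanishes for t \<ge> 1; then lim_coeff_Suc also
   covers k = 3, whose recurrence carries the source term 1. *)
definition lim_coeff :: "nat \<Rightarrow> real" where
  "lim_coeff k = (if k < 3 then 0 else 24 / (real k * (real k + 1) * (real k + 2)))"

lemma lim_coeff_mult_left:
  "3 \<le> k \<Longrightarrow> real k * lim_coeff k = 24 / ((real k + 1) * (real k + 2))"
  by (simp add: lim_coeff_def)

lemma lim_coeff_mult_right:
  assumes "3 \<le> k"
  shows "(real k + 2) * lim_coeff k = 24 / (real k * (real k + 1))"
proof -
  have "(real k + 2) * lim_coeff k = (real k + 2) * 24 / ((real k + 2) * (real k * (real k + 1)))"
    using assms by (simp add: lim_coeff_def ac_simps)
  also have "\<dots> = 24 / (real k * (real k + 1))"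
    by (rule mult_divide_mult_cancel_left) simp
  finally show ?thesis .
qed

lemma lim_coeff_Suc:
  assumes "2 \<le> k"
  shows "real k * lim_coeff k = (real k + 3) * lim_coeff (Suc k) - 2 * of_bool (k = 2)"
proof -
  have "(real k + 3) * lim_coeff (Suc k) = 24 / ((real k + 1) * (real k + 2))"
    using lim_coeff_mult_right[of "Suc k"] assms by (simp add: ac_simps)
  moreover have "k \<noteq> 2 \<Longrightarrow> real k * lim_coeff k = 24 / ((real k + 1) * (real k + 2))"
    using assms by (intro lim_coeff_mult_left) simp
  ultimately show ?thesis by (cases "k = 2") (simp_all add: lim_coeff_def)
qed

lemma lim_coeff_bounds: "0 \<le> lim_coeff k" "lim_coeff k \<le> 2/5"
proof -
  show "0 \<le> lim_coeff k" by (simp add: lim_coeff_def)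
  have "24 / (real k * (real k + 1) * (real k + 2)) \<le> 24 / (3 * 4 * 5)" if "3 \<le> k"
    using that by (intro frac_le mult_mono) auto
  then show "lim_coeff k \<le> 2/5" by (simp add: lim_coeff_def)
qed

lemma lim_coeff_mult_le: "real k * lim_coeff k \<le> 6/5"
proof (cases "k < 3")
  case False
  then have "real k * lim_coeff k = 24 / ((real k + 1) * (real k + 2))"
    by (simp add: lim_coeff_mult_left)
  also have "\<dots> \<le> 24 / (4 * 5)"
    using False by (intro frac_le mult_mono) auto
  finally show ?thesis by simp
qed (simp add: lim_coeff_def)

lemma affine_error_step:
  fixes k T N N' Np Q Qp b bp c :: real
  assumes "0 \<le> T"
    and N': "N' = N + c + (k * Np - (k + 1) * N - Qp + Q) / (2 * T + 1)"
    and bp: "k * bp = (k + 3) * b - 2 * c"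
  shows "N' - b * (T + 1) = (1 - (k + 1) / (2 * T + 1)) * (N - b * T)
    + (k / (2 * T + 1)) * (Np - bp * T) + (1 / (2 * T + 1)) * (c - b + Q - Qp)"
proof -
  define d where "d = 2 * T + 1"
  have d: "d \<noteq> 0" using assms(1) by (simp add: d_def)
  have "(N' - b * (T + 1)) * d = N * d + c * d + (k * Np - (k + 1) * N - Qp + Q) - b * (T + 1) * d"
    using N' d by (simp add: d_def field_simps)
  also have "\<dots> = (d - (k + 1)) * (N - b * T) + k * Np - ((k + 3) * b - 2 * c) * T + (c - b + Q - Qp)"
    by (simp add: d_def algebra_simps)
  also have "\<dots> = (d - (k + 1)) * (N - b * T) + k * (Np - bp * T) + (c - b + Q - Qp)"
    using arg_cong[OF bp, of "\<lambda>x. x * T"] by (simp add: algebra_simps)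
  finally have "N' - b * (T + 1) = ((d - (k + 1)) * (N - b * T) + k * (Np - bp * T) + (c - b + Q - Qp)) / d"
    using d by (simp add: eq_divide_eq)
  also have "\<dots> = (1 - (k + 1) / d) * (N - b * T) + (k / d) * (Np - bp * T) + (1 / d) * (c - b + Q - Qp)"
    using d by (simp add: field_simps)
  finally show ?thesis unfolding d_def .
qed

lemma abs_convex_comb3_le:
  fixes \<alpha> \<beta> \<gamma> x y z C :: real
  assumes "0 \<le> \<alpha>" "0 \<le> \<beta>" "0 \<le> \<gamma>" "\<alpha> + \<beta> + \<gamma> = 1"
    and "\<bar>x\<bar> \<le> C" "\<bar>y\<bar> \<le> C" "\<bar>z\<bar> \<le> C"
  shows "\<bar>\<alpha> * x + \<beta> * y + \<gamma> * z\<bar> \<le> C"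
proof -
  have "\<bar>\<alpha> * x + \<beta> * y + \<gamma> * z\<bar> \<le> \<alpha> * \<bar>x\<bar> + \<beta> * \<bar>y\<bar> + \<gamma> * \<bar>z\<bar>"
    using abs_triangle_ineq[of "\<alpha> * x + \<beta> * y" "\<gamma> * z"] abs_triangle_ineq[of "\<alpha> * x" "\<beta> * y"]
      assms(1-3) by (simp add: abs_mult)
  also have "\<dots> \<le> \<alpha> * C + \<beta> * C + \<gamma> * C"
    using assms by (intro add_mono mult_left_mono) auto
  also have "\<dots> = (\<alpha> + \<beta> + \<gamma>) * C" by (simp add: algebra_simps)
  also have "\<dots> = C" using assms(4) by simp
  finally show ?thesis .
qed

lemma N_4_2_bounds: "3 \<le> N 4 2" "N 4 2 \<le> 4"
proof -
  have N41: "N 4 1 = 0" by (rule N_eq_0_if_gt) simp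
  then have "N_corner 4 1 = 0" using N_corner_le_N[of 4 1] N_corner_bounds(1)[of 4 1] by simp
  then have "N 4 2 = (12 - N_corner 3 1) / 3"
    using N_Suc[of 3 1] N41 N_3_1 by (simp add: numeral_eq_Suc)
  then show "3 \<le> N 4 2" "N 4 2 \<le> 4" using N_corner_bounds[of 3 1] by simp_all
qed

lemma source_term_bound:
  assumes "2 \<le> j" and "1 \<le> t"
  shows "\<bar>of_bool (j = 2) - lim_coeff (Suc j) + N_corner (Suc j) t - N_corner j t\<bar> \<le> 18/5"
proof (cases "j = 2")
  case True
  have "N_corner j t = 0"
    using N_corner_le_N[of j t] N_corner_bounds(1)[of j t] N_eq_0_if_lt_3[OF assms(2), of j] True by simp
  then show ?thesis using True N_corner_bounds[of 3 t] by (simp add: lim_coeff_def)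
next
  case False
  then show ?thesis
    using N_corner_bounds[of j t] N_corner_bounds[of "Suc j" t] lim_coeff_bounds[of "Suc j"]
    unfolding abs_le_iff by simp
qed

lemma N_error_step:
  assumes "1 \<le> T" and "2 \<le> j" and "Suc j \<le> 2 * T + 1"
    and "\<bar>N j T - lim_coeff j * real T\<bar> \<le> 18/5"
    and "\<bar>N (Suc j) T - lim_coeff (Suc j) * real T\<bar> \<le> 18/5"
  shows "\<bar>N (Suc j) (Suc T) - lim_coeff (Suc j) * real (Suc T)\<bar> \<le> 18/5"
proof -
  define d where "d = 2 * real T + 1"
  have d: "real j + 1 \<le> d" "0 < d" using assms(3) by (auto simp: d_def)
  have "N (Suc j) (Suc T) - lim_coeff (Suc j) * (real T + 1) =
      (1 - (real j + 1) / d) * (N (Suc j) T - lim_coeff (Suc j) * real T)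
      + (real j / d) * (N j T - lim_coeff j * real T)
      + (1 / d) * (of_bool (j = 2) - lim_coeff (Suc j) + N_corner (Suc j) T - N_corner j T)"
    unfolding d_def using N_Suc[of j T] lim_coeff_Suc[OF assms(2)]
    by (intro affine_error_step) (simp_all add: algebra_simps)
  also have "\<bar>\<dots>\<bar> \<le> 18/5"
    using d assms(4,5) source_term_bound[OF assms(2,1)]
    by (intro abs_convex_comb3_le) (simp_all add: field_simps)
  finally show ?thesis by (simp add: add.commute)
qed

lemma N_error_bound:
  assumes "1 \<le> t"
  shows "\<bar>N k t - lim_coeff k * real t\<bar> \<le> 18/5"
  using assms
proof (induction t arbitrary: k rule: nat_induct_at_least)
  case base
  consider "k < 3" | "k = 3" | "3 < k" by linarith
  then show ?case
  proof cases
    case 1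
    then show ?thesis using N_eq_0_if_lt_3[of 1 k] by (simp add: lim_coeff_def)
  next
    case 2
    then show ?thesis using N_3_1 by (simp add: lim_coeff_def)
  next
    case 3
    then show ?thesis using N_eq_0_if_gt[of 1 k] lim_coeff_bounds[of k] by simp
  qed
next
  case (Suc T)
  consider "k < 3" | "3 \<le> k" "k \<le> 2 * T + 1" | "T + 3 < k" | "T = 1" "k = 4"
    using Suc.hyps by linarith
  then show ?case
  proof cases
    case 1
    then show ?thesis using N_eq_0_if_lt_3[of "Suc T" k] by (simp add: lim_coeff_def)
  next
    case 2
    then obtain j where j: "k = Suc j" "2 \<le> j" by (cases k) auto
    show ?thesis unfolding j(1) using 2 j Suc.hyps by (intro N_error_step Suc.IH) auto
  next
    case 3
    then have "lim_coeff k * real (Suc T) \<le> lim_coeff k * real k"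
      using lim_coeff_bounds(1)[of k] by (intro mult_left_mono) auto
    then show ?thesis
      using 3 N_eq_0_if_gt[of "Suc T" k] lim_coeff_bounds(1)[of k] lim_coeff_mult_le[of k]
      by (simp add: mult.commute)
  next
    case 4
    \<comment> \<open>Here 1 - k/(2T+1) < 0, so the convex-combination argument does not apply.\<close>
    then have "Suc T = 2" by simp
    show ?thesis unfolding \<open>Suc T = 2\<close> \<open>k = 4\<close>
      using N_4_2_bounds by (simp add: lim_coeff_def abs_le_iff)
  qed
qed

lemma LIMSEQ_div_of_bounded_deviation:
  fixes f :: "nat \<Rightarrow> real"
  assumes "\<And>t. 1 \<le> t \<Longrightarrow> \<bar>f t - b * real t\<bar> \<le> C"
  shows "(\<lambda>t. f t / real t) \<longlonglongrightarrow> b"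
proof -
  have "(\<lambda>t. (f t - b * real t) / real t) \<longlonglongrightarrow> 0"
  proof (rule Lim_null_comparison)
    show "\<forall>\<^sub>F t in sequentially. norm ((f t - b * real t) / real t) \<le> C / real t"
      using eventually_ge_at_top[of "1::nat"]
      by eventually_elim (use assms in \<open>simp add: abs_divide divide_right_mono\<close>)
  qed (rule lim_const_over_n)
  then have "(\<lambda>t. b + (f t - b * real t) / real t) \<longlonglongrightarrow> b"
    using tendsto_add[OF tendsto_const] by fastforce
  moreover have "\<forall>\<^sub>F t in sequentially. b + (f t - b * real t) / real t = f t / real t"
    using eventually_ge_at_top[of "1::nat"] by eventually_elim (simp add: field_simps)
  ultimately show ?thesis by (rule Lim_transform_eventually)
qed

theorem mainTheorem3:
  shows "\<exists>b :: nat \<Rightarrow> real.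
     (\<forall>k\<ge>3. (\<lambda>t. N k t / real t) \<longlonglongrightarrow> b k)
   \<and> b 3 = 2/5 \<and> b 4 = 1/5 \<and> b 5 = 4/35
   \<and> (\<forall>k\<ge>6. b k = 24 / (real k * (real k + 1) * (real k + 2)))
   \<and> (\<forall>k\<ge>3. \<forall>t\<ge>1. \<bar>N k t - b k * real t\<bar> \<le> 3.6)"
proof (intro exI conjI allI impI)
  show "(\<lambda>t. N k t / real t) \<longlonglongrightarrow> lim_coeff k" for k
    using N_error_bound by (rule LIMSEQ_div_of_bounded_deviation)
  show "\<bar>N k t - lim_coeff k * real t\<bar> \<le> 3.6" if "1 \<le> t" for k t
    using N_error_bound[OF that] by simp
qed (simp_all add: lim_coeff_def)

end
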